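(* Let $A$ be an irreducible $n\times n$ completely positive matrix with $\operatorname{rank}A=2$. Then $A$ has a unique CP factorization if and only if there exist indices $i\neq j$ with $a_{ij}=0$ such that the $i$-th row and the $j$-th column of $A$ are nonzero. If no such zero off-diagonal entry exists, then $A$ has infinitely many minimal CP factorizations.
   Context: A symmetric $n\times n$ matrix $A$ is completely positive if $A=BB^T$ for some entrywise nonnegative $n\times k$ matrix $B$; such an equality is a CP factorization of $A$. Only CP factorizations in which the columns of $B$ are pairwise linearly independent are considered, and two CP factorizations $A=BB^T=CC^T$ are considered equal if $C=BP$ for a permutation matrix $P$. The cp-rank of $A$ is the minimal number of columns of such a nonnegative $B$; a CP factorization with that many columns is called minimal. A symmetric matrix is irreducible if its graph (vertices $1,\dots,n$, with $\{i,j\}$, $i\ne j$, an edge iff $a_{ij}\neq0$) is connected. *)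

theory Defs
  imports "Jordan_Normal_Form.DL_Rank"
begin

text \<open>Matrices are Jordan_Normal_Form matrices over the reals; indices start at 0.\<close>

definition nonneg_mat :: "real mat \<Rightarrow> bool" where
  "nonneg_mat B \<longleftrightarrow> (\<forall>i < dim_row B. \<forall>j < dim_col B. B $$ (i, j) \<ge> 0)"

definition symmetric_mat :: "real mat \<Rightarrow> bool" where
  "symmetric_mat A \<longleftrightarrow> A \<in> carrier_mat (dim_row A) (dim_row A) \<and> transpose_mat A = A"

definition completely_positive :: "real mat \<Rightarrow> bool" where
  "completely_positive A \<longleftrightarrow> symmetric_mat A \<and>
     (\<exists>B. dim_row B = dim_row A \<and> nonneg_mat B \<and> A = B * transpose_mat B)"

definition lin_indep2 :: "nat \<Rightarrow> real vec \<Rightarrow> real vec \<Rightarrow> bool" where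
  "lin_indep2 n u v \<longleftrightarrow>
     (\<forall>a b. a \<cdot>\<^sub>v u + b \<cdot>\<^sub>v v = 0\<^sub>v n \<longrightarrow> a = 0 \<and> b = 0)"

definition cp_factorization :: "real mat \<Rightarrow> real mat \<Rightarrow> bool" where
  "cp_factorization A B \<longleftrightarrow> dim_row B = dim_row A \<and> nonneg_mat B \<and>
     A = B * transpose_mat B \<and>
     (\<forall>j < dim_col B. \<forall>l < dim_col B. j \<noteq> l \<longrightarrow>
        lin_indep2 (dim_row B) (col B j) (col B l))"

definition perm_mat :: "nat \<Rightarrow> (nat \<Rightarrow> nat) \<Rightarrow> real mat" where
  "perm_mat k p = mat k k (\<lambda>(i, j). if i = p j then 1 else 0)"

definition cp_equiv :: "real mat \<Rightarrow> real mat \<Rightarrow> bool" where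
  "cp_equiv B C \<longleftrightarrow> dim_col C = dim_col B \<and>
     (\<exists>p. p permutes {..<dim_col B} \<and> C = B * perm_mat (dim_col B) p)"

definition unique_cp_factorization :: "real mat \<Rightarrow> bool" where
  "unique_cp_factorization A \<longleftrightarrow>
     (\<exists>B. cp_factorization A B \<and> (\<forall>C. cp_factorization A C \<longrightarrow> cp_equiv B C))"

definition cp_rank :: "real mat \<Rightarrow> nat" where
  "cp_rank A = (LEAST k. \<exists>B. B \<in> carrier_mat (dim_row A) k \<and> nonneg_mat B \<and>
                             A = B * transpose_mat B)"

definition minimal_cp_factorizations :: "real mat \<Rightarrow> real mat set" where
  "minimal_cp_factorizations A = {B. cp_factorization A B \<and> dim_col B = cp_rank A}"

definition minimal_cp_classes :: "real mat \<Rightarrow> real mat set set" where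
  "minimal_cp_classes A =
     minimal_cp_factorizations A // {(B, C). cp_equiv B C}"

definition irreducible_mat :: "real mat \<Rightarrow> bool" where
  "irreducible_mat A \<longleftrightarrow>
     (\<forall>i < dim_row A. \<forall>j < dim_row A.
        (i, j) \<in> {(x, y). x < dim_row A \<and> y < dim_row A \<and> x \<noteq> y \<and> A $$ (x, y) \<noteq> 0}\<^sup>*)"

end

theory Submission
  imports Defs
begin

text \<open>The rows of a completely positive matrix \<open>A\<close> of rank two can be realised as vectors in
  the plane with pairwise nonnegative inner products.  If \<open>a\<^sub>s\<^sub>t = 0\<close> with row \<open>s\<close> and
  column \<open>t\<close> nonzero, then \<open>A = a\<^sub>s a\<^sub>s\<^sup>T / a\<^sub>s\<^sub>s + a\<^sub>t a\<^sub>t\<^sup>T / a\<^sub>t\<^sub>t\<close>; every row of a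
  nonnegative factor \<open>C\<close> is then the same combination of the rows \<open>s, t\<close> of \<open>C\<close>, these two
  rows have disjoint supports, and pairwise independence of the columns of \<open>C\<close> leaves only the
  two normalised columns \<open>s, t\<close> of \<open>A\<close>.  Otherwise irreducibility makes \<open>A\<close> entrywise
  positive, and after turning the plane so that the extreme vector lies on the first axis
  \<open>A = x x\<^sup>T + y y\<^sup>T\<close> with \<open>x > 0\<close> and \<open>y \<ge> 0\<close>.  Rotating the factor \<open>[x y]\<close> by any
  small angle keeps it nonnegative, which gives infinitely many inequivalent factorizations
  with two columns, the cp-rank.\<close>

lemma Cauchy_Schwarz_sum:
  fixes x y :: "'a \<Rightarrow> real"
  assumes "finite L"
  shows "(\<Sum>l\<in>L. x l * y l)\<^sup>2 \<le> (\<Sum>l\<in>L. (x l)\<^sup>2) * (\<Sum>l\<in>L. (y l)\<^sup>2)"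
proof -
  define a where "a = (\<Sum>l\<in>L. (x l)\<^sup>2)"
  define b where "b = (\<Sum>l\<in>L. x l * y l)"
  define c where "c = (\<Sum>l\<in>L. (y l)\<^sup>2)"
  have "0 \<le> (\<Sum>l\<in>L. (b * x l - a * y l)\<^sup>2)"
    by (simp add: sum_nonneg)
  also have "\<dots> = (\<Sum>l\<in>L. b\<^sup>2 * (x l)\<^sup>2 - 2 * a * b * (x l * y l) + a\<^sup>2 * (y l)\<^sup>2)"
    by (rule sum.cong) (auto simp: power2_eq_square algebra_simps)
  also have "\<dots> = b\<^sup>2 * a - 2 * a * b * b + a\<^sup>2 * c"
    by (simp add: sum.distrib sum_subtractf sum_distrib_left a_def b_def c_def)
  finally have quadratic: "0 \<le> a * (a * c - b\<^sup>2)"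
    by (simp add: power2_eq_square algebra_simps)
  show ?thesis
  proof (cases "a = 0")
    case True
    then have "\<forall>l\<in>L. x l = 0"
      using sum_nonneg_eq_0_iff[OF assms, of "\<lambda>l. (x l)\<^sup>2"] by (simp add: a_def)
    then show ?thesis
      by (simp add: sum_nonneg)
  next
    case False
    then have "0 < a"
      by (simp add: a_def order_less_le sum_nonneg)
    with quadratic show ?thesis
      by (simp add: a_def b_def c_def zero_le_mult_iff)
  qed
qed

lemma divide_mult_sqrt:
  fixes x y :: real
  assumes "0 < y"
  shows "x / y * sqrt y = x / sqrt y"
proof -
  have "x / y * sqrt y * sqrt y = x"
    using assms by (simp add: mult.assoc abs_of_pos)
  then show ?thesis
    using assms by (simp add: eq_divide_eq)
qed

lemma one_plus_square_pos: "0 < 1 + (e::real)\<^sup>2"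
  using zero_le_power2[of e] by linarith

section \<open>Plane vectors with nonnegative inner products\<close>

lemma finite_total_preorder_has_least:
  assumes "finite S" "S \<noteq> {}"
    and total: "\<And>x y. x \<in> S \<Longrightarrow> y \<in> S \<Longrightarrow> R x y \<or> R y x"
    and trans: "\<And>x y z. x \<in> S \<Longrightarrow> y \<in> S \<Longrightarrow> z \<in> S \<Longrightarrow> R x y \<Longrightarrow> R y z \<Longrightarrow> R x z"
  shows "\<exists>p\<in>S. \<forall>i\<in>S. R p i"
  using assms(1,2) total trans
proof (induction S rule: finite_ne_induct)
  case (singleton x)
  then show ?case by blast
next
  case (insert x F)
  obtain p where p: "p \<in> F" "\<forall>i\<in>F. R p i"
    using insert.IH insert.prems by blast
  show ?case
  proof (cases "R x p")
    case True
    then have "\<forall>i\<in>insert x F. R x i"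
      using insert.prems p by blast
    then show ?thesis by blast
  next
    case False
    then have "R p x"
      using insert.prems(1) p(1) by blast
    then show ?thesis
      using p by blast
  qed
qed

text \<open>Turning counterclockwise is transitive on plane vectors with pairwise nonnegative inner
  products, since their cross products satisfy
  \<open>(u \<times> w) |v|\<^sup>2 = (v \<bullet> w)(u \<times> v) + (v \<times> w)(u \<bullet> v)\<close>; so a finite family has a first
  vector in counterclockwise order.\<close>

lemma plane_vectors_extreme:
  fixes X Y :: "nat \<Rightarrow> real"
  assumes inner_nonneg: "\<And>i j. i < n \<Longrightarrow> j < n \<Longrightarrow> 0 \<le> X i * X j + Y i * Y j"
    and "q < n" "X q \<noteq> 0 \<or> Y q \<noteq> 0"
  obtains p where "p < n" "X p \<noteq> 0 \<or> Y p \<noteq> 0" "\<And>i. i < n \<Longrightarrow> 0 \<le> X p * Y i - Y p * X i"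
proof -
  define S where "S = {i. i < n \<and> (X i \<noteq> 0 \<or> Y i \<noteq> 0)}"
  define R where "R i j \<longleftrightarrow> 0 \<le> X i * Y j - Y i * X j" for i j
  have "R x z" if "x \<in> S" "y \<in> S" "z \<in> S" "R x y" "R y z" for x y z
  proof -
    have "0 < (X y)\<^sup>2 + (Y y)\<^sup>2"
      using that(2) by (auto simp: S_def add_pos_nonneg add_nonneg_pos)
    moreover have "0 \<le> (X y * X z + Y y * Y z) * (X x * Y y - Y x * X y)
                      + (X y * Y z - Y y * X z) * (X x * X y + Y x * Y y)"
      using that inner_nonneg by (auto simp: R_def S_def)
    moreover have "\<dots> = (X x * Y z - Y x * X z) * ((X y)\<^sup>2 + (Y y)\<^sup>2)"
      by (simp add: power2_eq_square algebra_simps)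
    ultimately show ?thesis
      by (simp add: R_def zero_le_mult_iff)
  qed
  moreover have "R x y \<or> R y x" for x y
    by (auto simp: R_def mult.commute)
  moreover have "finite S" "S \<noteq> {}"
    using assms(2,3) by (auto simp: S_def)
  ultimately obtain p where "p \<in> S" "\<forall>i\<in>S. R p i"
    using finite_total_preorder_has_least[of S R] by blast
  then show ?thesis
    using that by (fastforce simp: S_def R_def)
qed

section \<open>Matrices of rank two\<close>

context vec_space
begin

lemma lin_indpt_pair_iff:
  fixes u v :: "'a vec"
  assumes uv: "u \<in> carrier_vec n" "v \<in> carrier_vec n" "u \<noteq> v"
  shows "lin_indpt {u, v} \<longleftrightarrow> (\<forall>(a::'a) (b::'a). a \<cdot>\<^sub>v u + b \<cdot>\<^sub>v v = 0\<^sub>v n \<longrightarrow> a = 0 \<and> b = 0)"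
proof -
  have lincomb_pair: "lincomb c {u, v} = c u \<cdot>\<^sub>v u + c v \<cdot>\<^sub>v v" for c
    by (rule eq_vecI) (use uv in \<open>auto simp: lincomb_index\<close>)
  show ?thesis
  proof
    assume indpt: "lin_indpt {u, v}"
    show "\<forall>a b. a \<cdot>\<^sub>v u + b \<cdot>\<^sub>v v = 0\<^sub>v n \<longrightarrow> a = 0 \<and> b = 0"
    proof (intro allI impI)
      fix a b :: 'a
      define c where "c w = (if w = u then a else b)" for w
      assume "a \<cdot>\<^sub>v u + b \<cdot>\<^sub>v v = 0\<^sub>v n"
      then have "lincomb c {u, v} = 0\<^sub>v n"
        using uv(3) by (simp add: lincomb_pair c_def)
      then have coeff_zero: "c w = 0" if "w \<in> {u, v}" for w
        using lin_dep_crit[where A="{u, v}" and S="{u, v}" and a=c and v=w] indpt that by auto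
      show "a = 0 \<and> b = 0"
        using coeff_zero[of u] coeff_zero[of v] uv(3) by (simp add: c_def)
    qed
  next
    assume "\<forall>a b. a \<cdot>\<^sub>v u + b \<cdot>\<^sub>v v = 0\<^sub>v n \<longrightarrow> a = 0 \<and> b = 0"
    then show "lin_indpt {u, v}"
      using uv by (intro finite_lin_indpt2) (auto simp: lincomb_pair)
  qed
qed

lemma maximal_independent_columns_superset:
  assumes "U \<subseteq> set (cols A)" "lin_indpt U"
  obtains S where "finite S" "maximal S (\<lambda>T. T \<subseteq> set (cols A) \<and> lin_indpt T)" "U \<subseteq> S"
proof -
  have "\<exists>S. finite S \<and> maximal S (\<lambda>T. T \<subseteq> set (cols A) \<and> lin_indpt T) \<and> U \<subseteq> S"
    by (rule maximal_exists_superset[of "set (cols A)"]) (use assms in auto)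
  then show ?thesis
    using that by blast
qed

lemma rank_2_independent_columns:
  assumes A: "A \<in> carrier_mat n nc" and rank: "rank A = 2"
  obtains p q where "p < nc" "q < nc" "col A p \<noteq> col A q" "lin_indpt {col A p, col A q}"
proof -
  have "lin_indpt {}"
    by (rule finite_lin_indpt2) auto
  then obtain S where S: "finite S" "maximal S (\<lambda>T. T \<subseteq> set (cols A) \<and> lin_indpt T)"
    using maximal_independent_columns_superset[of "{}" A] by blast
  have "card S = 2"
    using rank_card_indpt[OF A S(2)] rank by simp
  then obtain u v where uv: "S = {u, v}" "u \<noteq> v"
    by (metis card_2_iff)
  have sub: "S \<subseteq> set (cols A)" "lin_indpt S"
    using S(2) unfolding maximal_def by auto
  obtain p where "p < nc" "u = col A p"
    using sub uv A by (auto simp: cols_def)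
  moreover obtain q where "q < nc" "v = col A q"
    using sub uv A by (auto simp: cols_def)
  ultimately show ?thesis
    using that sub uv by blast
qed

text \<open>In rank two, any two independent columns already form a maximal independent set.\<close>

lemma rank_2_column_in_span:
  assumes A: "A \<in> carrier_mat n nc" and rank: "rank A = 2"
    and pq: "p < nc" "q < nc" "col A p \<noteq> col A q" "lin_indpt {col A p, col A q}"
    and j: "j < nc"
  obtains a b where "col A j = a \<cdot>\<^sub>v col A p + b \<cdot>\<^sub>v col A q"
proof -
  let ?U = "{col A p, col A q}"
  have cols_carrier: "set (cols A) \<subseteq> carrier_vec n"
    using A cols_dim by blast
  have U: "?U \<subseteq> set (cols A)" "card ?U = 2"
    using pq A by (auto simp: cols_def)
  then have U_carrier: "?U \<subseteq> carrier_vec n"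
    using cols_carrier by blast
  obtain S where S: "finite S" "maximal S (\<lambda>T. T \<subseteq> set (cols A) \<and> lin_indpt T)" "?U \<subseteq> S"
    using maximal_independent_columns_superset[OF U(1) pq(4)] .
  have "card S = 2"
    using rank_card_indpt[OF A S(2)] rank by simp
  then have "S = ?U"
    using card_subset_eq[OF S(1,3)] U(2) by simp
  have col_j: "col A j \<in> set (cols A)" "col A j \<in> carrier_vec n"
    using j A by (auto simp: cols_def)
  have "col A j \<in> span ?U"
  proof (rule ccontr)
    assume not_span: "col A j \<notin> span ?U"
    then have "col A j \<notin> ?U"
      using in_own_span[OF U_carrier] by blast
    then have "lin_indpt (?U \<union> {col A j})"
      using lin_dep_iff_in_span[OF U_carrier pq(4) col_j(2)] not_span by simp
    then have "?U \<union> {col A j} = ?U"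
      using S(2) U(1) col_j(1) \<open>S = ?U\<close> unfolding maximal_def by blast
    then show False
      using \<open>col A j \<notin> ?U\<close> by blast
  qed
  then obtain c where "lincomb c ?U = col A j"
    using finite_in_span[of ?U "col A j"] U_carrier by blast
  then have "col A j = lincomb c ?U" ..
  also have "lincomb c ?U = c (col A p) \<cdot>\<^sub>v col A p + c (col A q) \<cdot>\<^sub>v col A q"
    by (rule eq_vecI) (use A pq in \<open>auto simp: lincomb_index\<close>)
  finally show ?thesis
    using that by blast
qed

end

lemma lin_indep2_iff:
  assumes "u \<in> carrier_vec n" "v \<in> carrier_vec n"
  shows "lin_indep2 n u v \<longleftrightarrow> (\<forall>a b. (\<forall>i<n. a * u $ i + b * v $ i = 0) \<longrightarrow> a = 0 \<and> b = 0)"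
proof -
  have "a \<cdot>\<^sub>v u + b \<cdot>\<^sub>v v = 0\<^sub>v n \<longleftrightarrow> (\<forall>i<n. a * u $ i + b * v $ i = 0)" for a b
    using assms by (auto simp: vec_eq_iff)
  then show ?thesis
    by (simp add: lin_indep2_def)
qed

lemma lin_indep2_commute:
  assumes "u \<in> carrier_vec n" "v \<in> carrier_vec n"
  shows "lin_indep2 n u v \<longleftrightarrow> lin_indep2 n v u"
proof -
  have "(\<forall>i<n. a * u $ i + b * v $ i = 0) \<longleftrightarrow> (\<forall>i<n. b * v $ i + a * u $ i = 0)" for a b
    by (simp add: add.commute)
  then show ?thesis
    unfolding lin_indep2_iff[OF assms] lin_indep2_iff[OF assms(2,1)] by blast
qed

lemma not_lin_indep2_multiples:
  assumes "w \<in> carrier_vec n"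
  shows "\<not> lin_indep2 n (c \<cdot>\<^sub>v w) (d \<cdot>\<^sub>v w)"
proof -
  have carrier: "c \<cdot>\<^sub>v w \<in> carrier_vec n" "d \<cdot>\<^sub>v w \<in> carrier_vec n"
    using assms by auto
  obtain a b where "\<forall>i<n. a * (c \<cdot>\<^sub>v w) $ i + b * (d \<cdot>\<^sub>v w) $ i = 0" "\<not> (a = 0 \<and> b = 0)"
  proof (cases "c = 0")
    case True
    then show ?thesis
      using that[of 1 0] assms by simp
  next
    case False
    then show ?thesis
      using that[of d "- c"] assms by (simp add: algebra_simps)
  qed
  then show ?thesis
    unfolding lin_indep2_iff[OF carrier] by blast
qed

lemma lin_indep2_neq:
  assumes "u \<in> carrier_vec n" "lin_indep2 n u v"
  shows "u \<noteq> v"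
  using assms not_lin_indep2_multiples[of u n 1 1] by auto

lemma rank_2_lin_indep2_columns:
  assumes A: "A \<in> carrier_mat n n" and rank: "vec_space.rank n A = 2"
  obtains p q where "p < n" "q < n" "lin_indep2 n (col A p) (col A q)"
proof -
  interpret vec_space "TYPE(real)" n .
  obtain p q where "p < n" "q < n" "col A p \<noteq> col A q" "lin_indpt {col A p, col A q}"
    using rank_2_independent_columns[OF A rank] .
  then show ?thesis
    using that A by (auto simp: lin_indep2_def lin_indpt_pair_iff)
qed

lemma rank_2_column_combination:
  assumes A: "A \<in> carrier_mat n n" and rank: "vec_space.rank n A = 2"
    and pq: "p < n" "q < n" "lin_indep2 n (col A p) (col A q)"
  obtains \<alpha> \<beta> where
    "\<And>i j. i < n \<Longrightarrow> j < n \<Longrightarrow> A $$ (i, j) = \<alpha> j * A $$ (i, p) + \<beta> j * A $$ (i, q)"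
proof -
  interpret vec_space "TYPE(real)" n .
  have "col A p \<noteq> col A q"
    using lin_indep2_neq[OF _ pq(3)] A pq by auto
  moreover from this have "lin_indpt {col A p, col A q}"
    using pq A by (auto simp: lin_indep2_def lin_indpt_pair_iff)
  ultimately have "\<exists>c. j < n \<longrightarrow> col A j = fst c \<cdot>\<^sub>v col A p + snd c \<cdot>\<^sub>v col A q" for j
    using rank_2_column_in_span[OF A rank pq(1,2)] by (metis fst_conv snd_conv)
  then obtain c where comb: "\<And>j. j < n \<Longrightarrow> col A j = fst (c j) \<cdot>\<^sub>v col A p + snd (c j) \<cdot>\<^sub>v col A q"
    by metis
  have "A $$ (i, j) = fst (c j) * A $$ (i, p) + snd (c j) * A $$ (i, q)" if "i < n" "j < n" for i j
  proof -
    have "A $$ (i, j) = col A j $ i"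
      using that A by simp
    also have "\<dots> = (fst (c j) \<cdot>\<^sub>v col A p + snd (c j) \<cdot>\<^sub>v col A q) $ i"
      by (simp only: comb[OF that(2)])
    also have "\<dots> = fst (c j) * A $$ (i, p) + snd (c j) * A $$ (i, q)"
      using that A pq by simp
    finally show ?thesis .
  qed
  then show ?thesis
    by (rule that[of "\<lambda>j. fst (c j)" "\<lambda>j. snd (c j)"])
qed

lemma rank_2_dim_gt_1:
  fixes A :: "real mat"
  assumes "A \<in> carrier_mat n n" "vec_space.rank n A = 2"
  shows "1 < n"
proof -
  obtain p q where "p < n" "q < n" "lin_indep2 n (col A p) (col A q)"
    using rank_2_lin_indep2_columns[OF assms] .
  then have "p \<noteq> q"
    using lin_indep2_neq[of "col A p" n "col A q"] assms(1) by auto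
  then show ?thesis
    using \<open>p < n\<close> \<open>q < n\<close> by linarith
qed

lemma rank_2_not_rank_one:
  fixes A :: "real mat"
  assumes A: "A \<in> carrier_mat n n" and rank: "vec_space.rank n A = 2" and p: "p < n"
  shows "\<not> (\<forall>i<n. \<forall>j<n. A $$ (i, j) = A $$ (p, j) / A $$ (p, p) * A $$ (i, p))"
proof
  assume rank_one: "\<forall>i<n. \<forall>j<n. A $$ (i, j) = A $$ (p, j) / A $$ (p, p) * A $$ (i, p)"
  have col_multiple: "col A j = (A $$ (p, j) / A $$ (p, p)) \<cdot>\<^sub>v col A p" if j: "j < n" for j
  proof (rule eq_vecI)
    fix i
    assume "i < dim_vec ((A $$ (p, j) / A $$ (p, p)) \<cdot>\<^sub>v col A p)"
    then have i: "i < n"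
      using A by simp
    show "col A j $ i = ((A $$ (p, j) / A $$ (p, p)) \<cdot>\<^sub>v col A p) $ i"
      using rank_one[rule_format, OF i j] A p i j by simp
  qed (use A in simp)
  obtain p0 q0 where pq: "p0 < n" "q0 < n" "lin_indep2 n (col A p0) (col A q0)"
    using rank_2_lin_indep2_columns[OF A rank] .
  have "\<not> lin_indep2 n (col A p0) (col A q0)"
    unfolding col_multiple[OF pq(1)] col_multiple[OF pq(2)]
    by (rule not_lin_indep2_multiples) (use A p in simp)
  then show False
    using pq(3) by contradiction
qed

lemma index_mult_transpose_mat:
  assumes "i < dim_row B" "j < dim_row B"
  shows "(B * transpose_mat B) $$ (i, j) = (\<Sum>l<dim_col B. B $$ (i, l) * B $$ (j, l))"
  using assms by (simp add: scalar_prod_def atLeast0LessThan)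

lemma gram_nonneg:
  fixes B :: "real mat"
  assumes "nonneg_mat B" "i < dim_row B" "j < dim_row B"
  shows "0 \<le> (B * transpose_mat B) $$ (i, j)"
  unfolding index_mult_transpose_mat[OF assms(2,3)]
  using assms by (auto simp: nonneg_mat_def intro!: sum_nonneg)

lemma gram_Cauchy_Schwarz:
  fixes B :: "real mat"
  assumes "i < dim_row B" "j < dim_row B"
  shows "((B * transpose_mat B) $$ (i, j))\<^sup>2
           \<le> (B * transpose_mat B) $$ (i, i) * (B * transpose_mat B) $$ (j, j)"
  unfolding index_mult_transpose_mat[OF assms(1,2)] index_mult_transpose_mat[OF assms(1,1)]
    index_mult_transpose_mat[OF assms(2,2)]
  using Cauchy_Schwarz_sum[of "{..<dim_col B}" "\<lambda>l. B $$ (i, l)" "\<lambda>l. B $$ (j, l)"]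
  by (simp add: power2_eq_square)

lemma gram_zero_entry_disjoint:
  fixes C :: "real mat"
  assumes "nonneg_mat C" "i < dim_row C" "j < dim_row C"
    and "(C * transpose_mat C) $$ (i, j) = 0" "l < dim_col C"
  shows "C $$ (i, l) * C $$ (j, l) = 0"
proof -
  have "\<forall>l\<in>{..<dim_col C}. 0 \<le> C $$ (i, l) * C $$ (j, l)"
    using assms(1-3) by (auto simp: nonneg_mat_def)
  then show ?thesis
    using assms(4,5) sum_nonneg_eq_0_iff[of "{..<dim_col C}" "\<lambda>l. C $$ (i, l) * C $$ (j, l)"]
    unfolding index_mult_transpose_mat[OF assms(2,3)] by blast
qed

lemma gram_diag_pos_obtain_entry:
  fixes C :: "real mat"
  assumes "nonneg_mat C" "i < dim_row C" "0 < (C * transpose_mat C) $$ (i, i)"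
  obtains l where "l < dim_col C" "0 < C $$ (i, l)"
proof -
  have "\<exists>l<dim_col C. C $$ (i, l) \<noteq> 0"
    using assms(3) unfolding index_mult_transpose_mat[OF assms(2,2)]
    by (metis (no_types, lifting) lessThan_iff mult_zero_left order_less_irrefl sum.neutral)
  then show ?thesis
    using that assms(1,2) by (force simp: nonneg_mat_def order_less_le)
qed

lemma completely_positive_factor:
  assumes "A \<in> carrier_mat n n" "completely_positive A"
  obtains W where "dim_row W = n" "nonneg_mat W" "A = W * transpose_mat W"
  using assms by (auto simp: completely_positive_def)

lemma completely_positive_symmetric:
  assumes "A \<in> carrier_mat n n" "completely_positive A" "i < n" "j < n"
  shows "A $$ (j, i) = A $$ (i, j)"
proof -
  have "transpose_mat A $$ (i, j) = A $$ (i, j)"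
    using assms(2) by (simp add: completely_positive_def symmetric_mat_def)
  then show ?thesis
    using assms(1,3,4) by simp
qed

lemma completely_positive_nonneg:
  assumes "A \<in> carrier_mat n n" "completely_positive A" "i < n" "j < n"
  shows "0 \<le> A $$ (i, j)"
proof -
  obtain W where "dim_row W = n" "nonneg_mat W" "A = W * transpose_mat W"
    using completely_positive_factor[OF assms(1,2)] .
  then show ?thesis
    using gram_nonneg[of W i j] assms(3,4) by simp
qed

lemma completely_positive_Cauchy_Schwarz:
  assumes "A \<in> carrier_mat n n" "completely_positive A" "i < n" "j < n"
  shows "(A $$ (i, j))\<^sup>2 \<le> A $$ (i, i) * A $$ (j, j)"
proof -
  obtain W where "dim_row W = n" "A = W * transpose_mat W"
    using completely_positive_factor[OF assms(1,2)] .
  then show ?thesis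
    using gram_Cauchy_Schwarz[of i W j] assms(3,4) by simp
qed

lemma completely_positive_diag_pos:
  assumes "A \<in> carrier_mat n n" "completely_positive A" "i < n" "j < n" "A $$ (i, j) \<noteq> 0"
  shows "0 < A $$ (i, i)"
proof -
  have "A $$ (i, i) \<noteq> 0"
    using completely_positive_Cauchy_Schwarz[OF assms(1-4)] assms(5) by auto
  then show ?thesis
    using completely_positive_nonneg[OF assms(1,2,3,3)] by simp
qed

lemma completely_positive_nonzero_row_diag_pos:
  assumes "A \<in> carrier_mat n n" "completely_positive A" "i < n" "row A i \<noteq> 0\<^sub>v n"
  shows "0 < A $$ (i, i)"
proof -
  have "\<exists>z<n. A $$ (i, z) \<noteq> 0"
  proof (rule ccontr)
    assume "\<not> (\<exists>z<n. A $$ (i, z) \<noteq> 0)"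
    then have "row A i = 0\<^sub>v n"
      using assms(1,3) by (intro eq_vecI) auto
    then show False
      using assms(4) by contradiction
  qed
  then show ?thesis
    using completely_positive_diag_pos[OF assms(1,2,3)] by blast
qed

lemma completely_positive_nonzero_col_diag_pos:
  assumes "A \<in> carrier_mat n n" "completely_positive A" "j < n" "col A j \<noteq> 0\<^sub>v n"
  shows "0 < A $$ (j, j)"
proof -
  have "col A j = row A j"
    using assms(1,3) completely_positive_symmetric[OF assms(1,2) _ assms(3)] by (auto intro!: eq_vecI)
  then show ?thesis
    using completely_positive_nonzero_row_diag_pos[OF assms(1-3)] assms(4) by simp
qed

lemma index_mult_perm_mat:
  assumes B: "B \<in> carrier_mat m k" and perm: "\<pi> permutes {..<k}" and "i < m" "j < k"
  shows "(B * perm_mat k \<pi>) $$ (i, j) = B $$ (i, \<pi> j)"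
proof -
  have "\<pi> j < k"
    using permutes_in_image[OF perm] assms(4) by simp
  have "(B * perm_mat k \<pi>) $$ (i, j) = (\<Sum>l\<in>{0..<k}. B $$ (i, l) * (if l = \<pi> j then 1 else 0))"
    using assms by (simp add: perm_mat_def scalar_prod_def)
  also have "\<dots> = (\<Sum>l\<in>{0..<k}. if l = \<pi> j then B $$ (i, l) else 0)"
    by (rule sum.cong) auto
  also have "\<dots> = B $$ (i, \<pi> j)"
    using \<open>\<pi> j < k\<close> by simp
  finally show ?thesis .
qed

lemma cp_equiv_refl: "cp_equiv B B"
proof -
  have "B * perm_mat (dim_col B) id = B"
  proof (rule eq_matI)
    fix i j
    assume "i < dim_row B" "j < dim_col B"
    then show "(B * perm_mat (dim_col B) id) $$ (i, j) = B $$ (i, j)"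
      using index_mult_perm_mat[OF carrier_matI permutes_id] by simp
  qed (simp_all add: perm_mat_def)
  then show ?thesis
    unfolding cp_equiv_def by (metis permutes_id)
qed

lemma cp_equiv_row_image:
  assumes "cp_equiv B C" "i < dim_row B"
  shows "(\<lambda>l. C $$ (i, l)) ` {..<dim_col C} = (\<lambda>l. B $$ (i, l)) ` {..<dim_col B}"
proof -
  obtain \<pi> where \<pi>: "\<pi> permutes {..<dim_col B}" "C = B * perm_mat (dim_col B) \<pi>"
    and dim: "dim_col C = dim_col B"
    using assms(1) by (auto simp: cp_equiv_def)
  have "C $$ (i, l) = B $$ (i, \<pi> l)" if "l < dim_col B" for l
    using index_mult_perm_mat[OF carrier_matI \<pi>(1) assms(2) that] \<pi>(2) by simp
  then have "(\<lambda>l. C $$ (i, l)) ` {..<dim_col C} = (\<lambda>l. B $$ (i, l)) ` (\<pi> ` {..<dim_col B})"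
    using dim by (auto simp: image_image)
  then show ?thesis
    by (simp add: permutes_image[OF \<pi>(1)])
qed

lemma cp_equiv_if_same_columns:
  assumes B: "B \<in> carrier_mat n 2" and C: "dim_row C = n" "{..<dim_col C} = {l0, l1}" "l0 \<noteq> l1"
    and C_l0: "\<And>i. i < n \<Longrightarrow> C $$ (i, l0) = B $$ (i, 0)"
    and C_l1: "\<And>i. i < n \<Longrightarrow> C $$ (i, l1) = B $$ (i, 1)"
  shows "cp_equiv B C"
proof -
  have "card {..<dim_col C} = card {l0, l1}"
    by (simp only: C(2))
  then have k: "dim_col C = 2"
    using C(3) by simp
  have "l0 \<in> {..<dim_col C}" "l1 \<in> {..<dim_col C}"
    unfolding C(2) by simp_all
  then have l01: "(l0 = 0 \<and> l1 = 1) \<or> (l0 = 1 \<and> l1 = 0)"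
    using k C(3) by auto
  define \<pi> where "\<pi> = Transposition.transpose 0 l0"
  have \<pi>: "\<pi> permutes {..<2}"
    unfolding \<pi>_def using l01 by (intro permutes_swap_id) auto
  have C_eq: "C = B * perm_mat 2 \<pi>"
  proof (rule eq_matI)
    fix i j
    assume "i < dim_row (B * perm_mat 2 \<pi>)" "j < dim_col (B * perm_mat 2 \<pi>)"
    then have ij: "i < n" "j < 2"
      using B by (simp_all add: perm_mat_def)
    have "(B * perm_mat 2 \<pi>) $$ (i, j) = B $$ (i, \<pi> j)"
      using index_mult_perm_mat[OF B \<pi> ij] .
    then show "C $$ (i, j) = (B * perm_mat 2 \<pi>) $$ (i, j)"
      using l01 ij C_l0[OF ij(1)] C_l1[OF ij(1)]
      by (auto simp: \<pi>_def less_Suc_eq numeral_2_eq_2)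
  qed (use B C(1) k in \<open>simp_all add: perm_mat_def\<close>)
  show ?thesis
    unfolding cp_equiv_def using \<pi> k C_eq B by (intro conjI exI[of _ \<pi>]) simp_all
qed

lemma cp_equiv_two_columns_row:
  assumes "cp_equiv D B" "B \<in> carrier_mat n 2" "p < n"
  shows "{B $$ (p, 0), B $$ (p, 1)} = {D $$ (p, 0), D $$ (p, 1)}"
proof -
  obtain \<pi> where B_eq: "B = D * perm_mat (dim_col D) \<pi>" and dim_col: "dim_col D = 2"
    using assms(1,2) by (auto simp: cp_equiv_def)
  have "dim_row D = n"
    using B_eq assms(2) by (metis carrier_matD(1) index_mult_mat(2))
  then have "(\<lambda>l. B $$ (p, l)) ` {..<dim_col B} = (\<lambda>l. D $$ (p, l)) ` {..<dim_col D}"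
    using assms(3) by (intro cp_equiv_row_image[OF assms(1)]) simp
  then have "(\<lambda>l. B $$ (p, l)) ` {..<2} = (\<lambda>l. D $$ (p, l)) ` {..<2}"
    by (simp only: dim_col carrier_matD(2)[OF assms(2)])
  moreover have "{..<2::nat} = {0, 1}"
    by auto
  ultimately show ?thesis
    by simp
qed

lemma cp_factorization_two_columnsI:
  assumes "B \<in> carrier_mat n 2" "dim_row A = n" "nonneg_mat B" "A = B * transpose_mat B"
    and "lin_indep2 n (col B 0) (col B 1)"
  shows "cp_factorization A B"
proof -
  have "lin_indep2 n (col B j) (col B l)" if "j < 2" "l < 2" "j \<noteq> l" for j l
  proof -
    have "(j = 0 \<and> l = 1) \<or> (j = 1 \<and> l = 0)"
      using that by auto
    then show ?thesis
      using assms(1,5) lin_indep2_commute[of "col B 0" n "col B 1"] by auto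
  qed
  then show ?thesis
    using assms by (auto simp: cp_factorization_def)
qed

lemma cp_factorization_proportional_columns:
  assumes "cp_factorization A C" "w \<in> carrier_vec (dim_row C)"
    and "l < dim_col C" "l' < dim_col C" "col C l = c \<cdot>\<^sub>v w" "col C l' = d \<cdot>\<^sub>v w"
  shows "l = l'"
proof (rule ccontr)
  assume "l \<noteq> l'"
  then have "lin_indep2 (dim_row C) (col C l) (col C l')"
    using assms(1,3,4) unfolding cp_factorization_def by blast
  then show False
    using not_lin_indep2_multiples[OF assms(2), of c d] unfolding assms(5,6) by blast
qed

section \<open>A zero entry forces uniqueness\<close>

lemma rank_2_zero_entry_expansion:
  assumes A: "A \<in> carrier_mat n n" "completely_positive A" "vec_space.rank n A = 2"
    and st: "s < n" "t < n" "A $$ (s, t) = 0" "0 < A $$ (s, s)" "0 < A $$ (t, t)"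
    and ij: "i < n" "j < n"
  shows "A $$ (i, j) = A $$ (i, s) * A $$ (j, s) / A $$ (s, s) + A $$ (i, t) * A $$ (j, t) / A $$ (t, t)"
proof -
  have A_ts: "A $$ (t, s) = 0"
    using completely_positive_symmetric[OF A(1,2) st(1,2)] st(3) by simp
  have indep: "a = 0 \<and> b = 0" if "\<forall>k<n. a * col A s $ k + b * col A t $ k = 0" for a b
  proof -
    have "a * A $$ (s, s) = 0" "b * A $$ (t, t) = 0"
      using that[rule_format, OF st(1)] that[rule_format, OF st(2)] st(1,2,3) A_ts A(1) by simp_all
    then show ?thesis
      using st(4,5) by simp
  qed
  moreover have "col A s \<in> carrier_vec n" "col A t \<in> carrier_vec n"
    using A(1) st(1,2) by simp_all
  ultimately have "lin_indep2 n (col A s) (col A t)"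
    using lin_indep2_iff by blast
  then obtain \<alpha> \<beta> where
    comb: "\<And>k l. k < n \<Longrightarrow> l < n \<Longrightarrow> A $$ (k, l) = \<alpha> l * A $$ (k, s) + \<beta> l * A $$ (k, t)"
    using rank_2_column_combination[OF A(1,3) st(1,2)] by blast
  have "\<alpha> j = A $$ (j, s) / A $$ (s, s)"
    using comb[OF st(1) ij(2)] st(3,4) completely_positive_symmetric[OF A(1,2) st(1) ij(2)]
    by (simp add: field_simps)
  moreover have "\<beta> j = A $$ (j, t) / A $$ (t, t)"
    using comb[OF st(2) ij(2)] A_ts st(5) completely_positive_symmetric[OF A(1,2) st(2) ij(2)]
    by (simp add: field_simps)
  ultimately show ?thesis
    using comb[OF ij] by (simp add: mult.commute)
qed

text \<open>The residual of row \<open>i\<close> of \<open>C\<close> against the rows \<open>s, t\<close> has squared norm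
  \<open>a\<^sub>i\<^sub>i - a\<^sub>i\<^sub>s\<^sup>2/a\<^sub>s\<^sub>s - a\<^sub>i\<^sub>t\<^sup>2/a\<^sub>t\<^sub>t = 0\<close>.\<close>

lemma factor_row_expansion:
  fixes C :: "real mat"
  assumes AC: "A = C * transpose_mat C" and dim: "dim_row C = n"
    and st: "s < n" "t < n" "A $$ (s, t) = 0" "0 < A $$ (s, s)" "0 < A $$ (t, t)"
    and diag: "A $$ (i, i) = A $$ (i, s) * A $$ (i, s) / A $$ (s, s) + A $$ (i, t) * A $$ (i, t) / A $$ (t, t)"
    and i: "i < n" and l: "l < dim_col C"
  shows "C $$ (i, l) = A $$ (i, s) / A $$ (s, s) * C $$ (s, l) + A $$ (i, t) / A $$ (t, t) * C $$ (t, l)"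
proof -
  let ?k = "dim_col C"
  define a where "a = A $$ (i, s) / A $$ (s, s)"
  define b where "b = A $$ (i, t) / A $$ (t, t)"
  define r where "r l = (C $$ (i, l) - a * C $$ (s, l) - b * C $$ (t, l))\<^sup>2" for l
  have entry: "A $$ (x, y) = (\<Sum>l<?k. C $$ (x, l) * C $$ (y, l))" if "x < n" "y < n" for x y
    using index_mult_transpose_mat[of x C y] that dim AC by simp
  have "(\<Sum>l<?k. r l) = (\<Sum>l<?k. C $$ (i, l) * C $$ (i, l) + a\<^sup>2 * (C $$ (s, l) * C $$ (s, l))
      + b\<^sup>2 * (C $$ (t, l) * C $$ (t, l)) - 2 * a * (C $$ (i, l) * C $$ (s, l))
      - 2 * b * (C $$ (i, l) * C $$ (t, l)) + 2 * a * b * (C $$ (s, l) * C $$ (t, l)))"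
    unfolding r_def by (rule sum.cong) (auto simp: power2_eq_square algebra_simps)
  also have "\<dots> = A $$ (i, i) + a\<^sup>2 * A $$ (s, s) + b\<^sup>2 * A $$ (t, t) - 2 * a * A $$ (i, s)
      - 2 * b * A $$ (i, t) + 2 * a * b * A $$ (s, t)"
    using entry[OF i i] entry[OF st(1) st(1)] entry[OF st(2) st(2)] entry[OF i st(1)]
      entry[OF i st(2)] entry[OF st(1) st(2)]
    by (simp add: sum.distrib sum_subtractf sum_distrib_left)
  also have "\<dots> = 0"
    using diag st(3,4,5) by (simp add: a_def b_def field_simps power2_eq_square)
  finally have "r l = 0"
    using l sum_nonneg_eq_0_iff[of "{..<?k}" r] by (simp add: r_def)
  then show ?thesis
    by (simp add: r_def a_def b_def)
qed

lemma cp_factorization_columns_if_zero_entry: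
  assumes A: "A \<in> carrier_mat n n" and C: "cp_factorization A C"
    and st: "s < n" "t < n" "A $$ (s, t) = 0" "0 < A $$ (s, s)" "0 < A $$ (t, t)"
    and diag: "\<And>i. i < n \<Longrightarrow>
      A $$ (i, i) = A $$ (i, s) * A $$ (i, s) / A $$ (s, s) + A $$ (i, t) * A $$ (i, t) / A $$ (t, t)"
  obtains l0 l1 where "{..<dim_col C} = {l0, l1}" "l0 \<noteq> l1"
    "\<And>i. i < n \<Longrightarrow> C $$ (i, l0) = A $$ (i, s) / sqrt (A $$ (s, s))"
    "\<And>i. i < n \<Longrightarrow> C $$ (i, l1) = A $$ (i, t) / sqrt (A $$ (t, t))"
proof -
  let ?k = "dim_col C"
  have dim: "dim_row C = n" and nonneg: "nonneg_mat C" and AC: "A = C * transpose_mat C"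
    using C A by (auto simp: cp_factorization_def)
  note row_expansion = factor_row_expansion[OF AC dim st diag]
  define \<alpha> where "\<alpha> = vec n (\<lambda>i. A $$ (i, s) / A $$ (s, s))"
  define \<beta> where "\<beta> = vec n (\<lambda>i. A $$ (i, t) / A $$ (t, t))"
  have carrier: "\<alpha> \<in> carrier_vec (dim_row C)" "\<beta> \<in> carrier_vec (dim_row C)"
    by (simp_all add: dim \<alpha>_def \<beta>_def)
  have col_\<alpha>: "col C l = C $$ (s, l) \<cdot>\<^sub>v \<alpha>" if "l < ?k" "C $$ (t, l) = 0" for l
    by (rule eq_vecI) (use row_expansion that dim in \<open>auto simp: \<alpha>_def\<close>)
  have col_\<beta>: "col C l = C $$ (t, l) \<cdot>\<^sub>v \<beta>" if "l < ?k" "C $$ (s, l) = 0" for l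
    by (rule eq_vecI) (use row_expansion that dim in \<open>auto simp: \<beta>_def\<close>)
  have along_\<alpha>: "l = l'" if "l < ?k" "l' < ?k" "C $$ (t, l) = 0" "C $$ (t, l') = 0" for l l'
    using cp_factorization_proportional_columns[OF C carrier(1) that(1,2) col_\<alpha> col_\<alpha>] that by blast
  have along_\<beta>: "l = l'" if "l < ?k" "l' < ?k" "C $$ (s, l) = 0" "C $$ (s, l') = 0" for l l'
    using cp_factorization_proportional_columns[OF C carrier(2) that(1,2) col_\<beta> col_\<beta>] that by blast
  have disjoint: "C $$ (s, l) * C $$ (t, l) = 0" if "l < ?k" for l
    using gram_zero_entry_disjoint[OF nonneg _ _ _ that] st(1,2,3) dim AC by simp
  obtain l0 where l0: "l0 < ?k" "0 < C $$ (s, l0)"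
    using gram_diag_pos_obtain_entry[OF nonneg] st(1,4) dim AC by auto
  obtain l1 where l1: "l1 < ?k" "0 < C $$ (t, l1)"
    using gram_diag_pos_obtain_entry[OF nonneg] st(2,5) dim AC by auto
  have t_l0: "C $$ (t, l0) = 0" and s_l1: "C $$ (s, l1) = 0"
    using disjoint[OF l0(1)] disjoint[OF l1(1)] l0(2) l1(2) by simp_all
  have "l0 \<noteq> l1"
    using t_l0 l1(2) by auto
  have "l = l0 \<or> l = l1" if "l < ?k" for l
    using disjoint[OF that] along_\<alpha>[OF that l0(1) _ t_l0] along_\<beta>[OF that l1(1) _ s_l1] by auto
  then have columns: "{..<?k} = {l0, l1}"
    using l0(1) l1(1) by auto
  have "A $$ (s, s) = (C $$ (s, l0))\<^sup>2" "A $$ (t, t) = (C $$ (t, l1))\<^sup>2"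
    using index_mult_transpose_mat[of s C s] index_mult_transpose_mat[of t C t] st(1,2)
      t_l0 s_l1 \<open>l0 \<noteq> l1\<close> dim AC by (simp_all add: columns power2_eq_square)
  then have sqrt_s: "C $$ (s, l0) = sqrt (A $$ (s, s))" and sqrt_t: "C $$ (t, l1) = sqrt (A $$ (t, t))"
    using l0(2) l1(2) by simp_all
  show ?thesis
  proof (rule that[OF columns \<open>l0 \<noteq> l1\<close>])
    fix i
    assume i: "i < n"
    show "C $$ (i, l0) = A $$ (i, s) / sqrt (A $$ (s, s))"
      using row_expansion[OF i i l0(1)] t_l0 sqrt_s divide_mult_sqrt[OF st(4)] by simp
    show "C $$ (i, l1) = A $$ (i, t) / sqrt (A $$ (t, t))"
      using row_expansion[OF i i l1(1)] s_l1 sqrt_t divide_mult_sqrt[OF st(5)] by simp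
  qed
qed

lemma cp_factorization_normalized_columns:
  assumes A: "A \<in> carrier_mat n n" "completely_positive A"
    and st: "s < n" "t < n" "A $$ (s, t) = 0" "0 < A $$ (s, s)" "0 < A $$ (t, t)"
    and expansion: "\<And>i j. i < n \<Longrightarrow> j < n \<Longrightarrow>
      A $$ (i, j) = A $$ (i, s) * A $$ (j, s) / A $$ (s, s) + A $$ (i, t) * A $$ (j, t) / A $$ (t, t)"
  shows "cp_factorization A (mat n 2 (\<lambda>(i, j).
           if j = 0 then A $$ (i, s) / sqrt (A $$ (s, s)) else A $$ (i, t) / sqrt (A $$ (t, t))))"
    (is "cp_factorization A ?B")
proof (rule cp_factorization_two_columnsI)
  have sqrt_sq: "sqrt (A $$ (s, s)) * sqrt (A $$ (s, s)) = A $$ (s, s)"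
    "sqrt (A $$ (t, t)) * sqrt (A $$ (t, t)) = A $$ (t, t)"
    using st(4,5) by simp_all
  show "?B \<in> carrier_mat n 2" "dim_row A = n"
    using A(1) by simp_all
  show "nonneg_mat ?B"
    using completely_positive_nonneg[OF A(1,2)] st(1,2) by (auto simp: nonneg_mat_def)
  show "A = ?B * transpose_mat ?B"
  proof (rule eq_matI)
    fix i j
    assume "i < dim_row (?B * transpose_mat ?B)" "j < dim_col (?B * transpose_mat ?B)"
    then have ij: "i < n" "j < n"
      by simp_all
    have "(?B * transpose_mat ?B) $$ (i, j) = (\<Sum>l<2. ?B $$ (i, l) * ?B $$ (j, l))"
      using index_mult_transpose_mat[of i ?B j] ij by simp
    also have "\<dots> = A $$ (i, s) * A $$ (j, s) / (sqrt (A $$ (s, s)) * sqrt (A $$ (s, s)))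
                   + A $$ (i, t) * A $$ (j, t) / (sqrt (A $$ (t, t)) * sqrt (A $$ (t, t)))"
      using ij by (simp add: numeral_2_eq_2)
    finally show "A $$ (i, j) = (?B * transpose_mat ?B) $$ (i, j)"
      unfolding sqrt_sq using expansion[OF ij] by simp
  qed (use A(1) in simp_all)
  have carrier: "col ?B 0 \<in> carrier_vec n" "col ?B 1 \<in> carrier_vec n"
    by simp_all
  have A_ts: "A $$ (t, s) = 0"
    using completely_positive_symmetric[OF A(1,2) st(1,2)] st(3) by simp
  have "a = 0 \<and> b = 0" if "\<forall>i<n. a * col ?B 0 $ i + b * col ?B 1 $ i = 0" for a b
  proof
    show "a = 0"
      using that[rule_format, OF st(1)] st(1,3,4) by simp
    show "b = 0"
      using that[rule_format, OF st(2)] st(2,5) A_ts by simp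
  qed
  then show "lin_indep2 n (col ?B 0) (col ?B 1)"
    using lin_indep2_iff[OF carrier] by blast
qed

lemma unique_cp_factorization_if_zero_entry:
  assumes A: "A \<in> carrier_mat n n" "completely_positive A" "vec_space.rank n A = 2"
    and st: "s < n" "t < n" "A $$ (s, t) = 0" "0 < A $$ (s, s)" "0 < A $$ (t, t)"
  shows "unique_cp_factorization A"
proof -
  have diag: "A $$ (i, i) =
      A $$ (i, s) * A $$ (i, s) / A $$ (s, s) + A $$ (i, t) * A $$ (i, t) / A $$ (t, t)"
    if "i < n" for i
    using rank_2_zero_entry_expansion[OF A st that that] .
  define B where "B = mat n 2 (\<lambda>(i, j).
    if j = 0 then A $$ (i, s) / sqrt (A $$ (s, s)) else A $$ (i, t) / sqrt (A $$ (t, t)))"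
  have B: "cp_factorization A B"
    unfolding B_def
    by (rule cp_factorization_normalized_columns[OF A(1,2) st rank_2_zero_entry_expansion[OF A st]])
  have "cp_equiv B C" if C: "cp_factorization A C" for C
  proof -
    obtain l0 l1 where cols: "{..<dim_col C} = {l0, l1}" "l0 \<noteq> l1"
      and "\<And>i. i < n \<Longrightarrow> C $$ (i, l0) = A $$ (i, s) / sqrt (A $$ (s, s))"
      and "\<And>i. i < n \<Longrightarrow> C $$ (i, l1) = A $$ (i, t) / sqrt (A $$ (t, t))"
      using cp_factorization_columns_if_zero_entry[OF A(1) C st diag] by blast
    moreover have "dim_row C = n"
      using C A(1) by (simp add: cp_factorization_def)
    ultimately show ?thesis
      by (intro cp_equiv_if_same_columns[of B n C l0 l1]) (simp_all add: B_def)
  qed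
  then show ?thesis
    using B unfolding unique_cp_factorization_def by blast
qed

section \<open>Planar Gram representation\<close>

text \<open>Complete the square in the quadratic form
  \<open>A\<^sub>0 \<alpha>\<^sub>i \<alpha>\<^sub>j + B\<^sub>0 (\<alpha>\<^sub>i \<beta>\<^sub>j + \<beta>\<^sub>i \<alpha>\<^sub>j) + C\<^sub>0 \<beta>\<^sub>i \<beta>\<^sub>j\<close>, where \<open>(\<alpha>\<^sub>j, \<beta>\<^sub>j)\<close> are
  the coordinates of column \<open>j\<close> with respect to the columns \<open>p\<^sub>0, q\<^sub>0\<close>; their independence
  makes \<open>A\<^sub>0 C\<^sub>0 - B\<^sub>0\<^sup>2\<close> positive.\<close>

lemma rank_2_planar_gram:
  fixes a :: "nat \<Rightarrow> nat \<Rightarrow> real"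
  assumes sym: "\<And>i j. i < n \<Longrightarrow> j < n \<Longrightarrow> a i j = a j i"
    and nonneg: "\<And>i j. i < n \<Longrightarrow> j < n \<Longrightarrow> 0 \<le> a i j"
    and Cauchy_Schwarz: "\<And>i j. i < n \<Longrightarrow> j < n \<Longrightarrow> (a i j)\<^sup>2 \<le> a i i * a j j"
    and pq: "p0 < n" "q0 < n"
    and indep: "\<And>c d. \<forall>i<n. c * a i p0 + d * a i q0 = 0 \<Longrightarrow> c = 0 \<and> d = 0"
    and comb: "\<And>i j. i < n \<Longrightarrow> j < n \<Longrightarrow> a i j = \<alpha> j * a i p0 + \<beta> j * a i q0"
  obtains X Y where "X p0 \<noteq> 0" "\<And>i j. i < n \<Longrightarrow> j < n \<Longrightarrow> a i j = X i * X j + Y i * Y j"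
proof -
  define A0 B0 C0 where "A0 = a p0 p0" and "B0 = a p0 q0" and "C0 = a q0 q0"
  have col_p0: "a i p0 = \<alpha> i * A0 + \<beta> i * B0" if "i < n" for i
    using comb[OF pq(1) that] sym[OF that pq(1)] by (simp add: A0_def B0_def)
  have col_q0: "a i q0 = \<alpha> i * B0 + \<beta> i * C0" if "i < n" for i
    using comb[OF pq(2) that] sym[OF that pq(2)] sym[OF pq] by (simp add: B0_def C0_def)
  have quadratic_form: "a i j = A0 * \<alpha> i * \<alpha> j + B0 * (\<alpha> i * \<beta> j + \<beta> i * \<alpha> j) + C0 * \<beta> i * \<beta> j"
    if "i < n" "j < n" for i j
    using comb[OF that] col_p0[OF that(1)] col_q0[OF that(1)] by (simp add: algebra_simps)
  have "A0 * C0 \<noteq> B0\<^sup>2"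
  proof
    assume singular: "A0 * C0 = B0\<^sup>2"
    have "B0 * a i p0 + (- A0) * a i q0 = 0 \<and> 1 * a i p0 + 0 * a i q0 = 0"
      if "i < n" "A0 = 0" "B0 = 0" for i
      using col_p0[OF that(1)] that(2,3) by simp
    moreover have "B0 * a i p0 + (- A0) * a i q0 = 0" if "i < n" for i
      using col_p0[OF that] col_q0[OF that] singular by (simp add: power2_eq_square algebra_simps)
    ultimately show False
      using indep[of B0 "- A0"] indep[of 1 0] by (cases "A0 = 0 \<and> B0 = 0") auto
  qed
  then have discriminant: "0 < A0 * C0 - B0\<^sup>2"
    using Cauchy_Schwarz[OF pq] by (simp add: A0_def B0_def C0_def)
  have "0 \<le> A0" "0 \<le> C0"
    using nonneg pq by (simp_all add: A0_def C0_def)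
  then have A0_pos: "0 < A0"
    using discriminant by (cases "A0 = 0") simp_all
  define X where "X i = a p0 i / sqrt A0" for i
  define Y where "Y i = sqrt ((A0 * C0 - B0\<^sup>2) / A0) * \<beta> i" for i
  show ?thesis
  proof
    show "X p0 \<noteq> 0"
      using A0_pos by (simp add: X_def A0_def)
    fix i j
    assume ij: "i < n" "j < n"
    have sq: "sqrt A0 * sqrt A0 = A0"
      "sqrt ((A0 * C0 - B0\<^sup>2) / A0) * sqrt ((A0 * C0 - B0\<^sup>2) / A0) = (A0 * C0 - B0\<^sup>2) / A0"
      using A0_pos discriminant by simp_all
    have "X i * X j + Y i * Y j = a p0 i * a p0 j / (sqrt A0 * sqrt A0)
           + (sqrt ((A0 * C0 - B0\<^sup>2) / A0) * sqrt ((A0 * C0 - B0\<^sup>2) / A0)) * \<beta> i * \<beta> j"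
      by (simp add: X_def Y_def algebra_simps)
    also have "\<dots> = a p0 i * a p0 j / A0 + (A0 * C0 - B0\<^sup>2) / A0 * \<beta> i * \<beta> j"
      by (simp only: sq)
    also have "\<dots> = a i j"
      using quadratic_form[OF ij] col_p0 ij sym[OF pq(1)] A0_pos
      by (simp add: field_simps power2_eq_square)
    finally show "a i j = X i * X j + Y i * Y j" ..
  qed
qed

text \<open>Uses Lagrange's identity \<open>(u \<bullet> v)(u \<bullet> w) + (u \<times> v)(u \<times> w) = |u|\<^sup>2 (v \<bullet> w)\<close> with \<open>u\<close> the
  extreme vector.\<close>

lemma planar_gram_rotation:
  fixes X Y :: "nat \<Rightarrow> real"
  assumes gram: "\<And>i j. i < n \<Longrightarrow> j < n \<Longrightarrow> a i j = X i * X j + Y i * Y j"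
    and nonneg: "\<And>i j. i < n \<Longrightarrow> j < n \<Longrightarrow> 0 \<le> a i j"
    and q: "q < n" "X q \<noteq> 0"
  obtains p y where "p < n" "0 < a p p" "\<And>i. i < n \<Longrightarrow> 0 \<le> y i" "y p = 0"
    "\<And>i j. i < n \<Longrightarrow> j < n \<Longrightarrow> a i j = a p i * a p j / a p p + y i * y j"
proof -
  have "0 \<le> X i * X j + Y i * Y j" if "i < n" "j < n" for i j
    using nonneg[OF that] gram[OF that] by simp
  then obtain p where p: "p < n" "X p \<noteq> 0 \<or> Y p \<noteq> 0" "\<And>i. i < n \<Longrightarrow> 0 \<le> X p * Y i - Y p * X i"
    using plane_vectors_extreme[of n X Y q] q by blast
  have a_pp: "a p p = (X p)\<^sup>2 + (Y p)\<^sup>2"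
    using gram[OF p(1) p(1)] by (simp add: power2_eq_square)
  then have a_pp_pos: "0 < a p p"
    using p(2) by (auto simp: add_pos_nonneg add_nonneg_pos)
  define y where "y i = (X p * Y i - Y p * X i) / sqrt (a p p)" for i
  show ?thesis
  proof
    show "p < n" "0 < a p p" "y p = 0"
      using p(1) a_pp_pos by (simp_all add: y_def)
    show "0 \<le> y i" if "i < n" for i
      using p(3)[OF that] a_pp_pos by (simp add: y_def)
    fix i j
    assume ij: "i < n" "j < n"
    have "a p i * a p j / a p p + y i * y j
        = ((X p * X i + Y p * Y i) * (X p * X j + Y p * Y j)
           + (X p * Y i - Y p * X i) * (X p * Y j - Y p * X j)) / a p p"
      using gram[OF p(1) ij(1)] gram[OF p(1) ij(2)] a_pp_pos
      by (simp add: y_def field_simps)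
    also have "\<dots> = ((X p)\<^sup>2 + (Y p)\<^sup>2) * (X i * X j + Y i * Y j) / a p p"
      by (simp add: power2_eq_square algebra_simps)
    also have "\<dots> = a i j"
      unfolding a_pp[symmetric] using gram[OF ij] a_pp_pos by simp
    finally show "a i j = a p i * a p j / a p p + y i * y j" ..
  qed
qed

lemma rank_2_cp_decomposition:
  assumes A: "A \<in> carrier_mat n n" "completely_positive A" "vec_space.rank n A = 2"
  obtains p q y where "p < n" "q < n" "0 < A $$ (p, p)" "\<And>i. i < n \<Longrightarrow> 0 \<le> y i" "y p = 0"
    "y q \<noteq> 0"
    "\<And>i j. i < n \<Longrightarrow> j < n \<Longrightarrow>
      A $$ (i, j) = A $$ (p, i) * A $$ (p, j) / A $$ (p, p) + y i * y j"
proof -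
  obtain p0 q0 where pq: "p0 < n" "q0 < n" "lin_indep2 n (col A p0) (col A q0)"
    using rank_2_lin_indep2_columns[OF A(1,3)] .
  have carrier: "col A p0 \<in> carrier_vec n" "col A q0 \<in> carrier_vec n"
    using A(1) pq(1,2) by simp_all
  have indep: "c = 0 \<and> d = 0" if "\<forall>i<n. c * A $$ (i, p0) + d * A $$ (i, q0) = 0" for c d
  proof -
    have "\<forall>i<n. c * col A p0 $ i + d * col A q0 $ i = 0"
      using that A(1) pq(1,2) by simp
    then show ?thesis
      using pq(3) lin_indep2_iff[OF carrier] by blast
  qed
  obtain \<alpha> \<beta> where
    comb: "\<And>i j. i < n \<Longrightarrow> j < n \<Longrightarrow> A $$ (i, j) = \<alpha> j * A $$ (i, p0) + \<beta> j * A $$ (i, q0)"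
    using rank_2_column_combination[OF A(1,3) pq] by blast
  have sym: "A $$ (i, j) = A $$ (j, i)" if "i < n" "j < n" for i j
    using completely_positive_symmetric[OF A(1,2) that(2,1)] .
  obtain X Y where "X p0 \<noteq> 0" "\<And>i j. i < n \<Longrightarrow> j < n \<Longrightarrow> A $$ (i, j) = X i * X j + Y i * Y j"
    using rank_2_planar_gram[of n "\<lambda>i j. A $$ (i, j)", OF sym completely_positive_nonneg[OF A(1,2)]
        completely_positive_Cauchy_Schwarz[OF A(1,2)] pq(1,2) indep comb] by blast
  then obtain p y where p: "p < n" "0 < A $$ (p, p)" "\<And>i. i < n \<Longrightarrow> 0 \<le> y i" "y p = 0"
    and decomposition: "\<And>i j. i < n \<Longrightarrow> j < n \<Longrightarrow>
      A $$ (i, j) = A $$ (p, i) * A $$ (p, j) / A $$ (p, p) + y i * y j"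
    using planar_gram_rotation[of n "\<lambda>i j. A $$ (i, j)" X Y p0] completely_positive_nonneg[OF A(1,2)]
      pq(1) by metis
  have "\<exists>q<n. y q \<noteq> 0"
  proof (rule ccontr)
    assume "\<not> (\<exists>q<n. y q \<noteq> 0)"
    then have y_zero: "y i = 0" if "i < n" for i
      using that by blast
    have "A $$ (i, j) = A $$ (p, j) / A $$ (p, p) * A $$ (i, p)" if "i < n" "j < n" for i j
    proof -
      have "A $$ (i, j) = A $$ (p, i) * A $$ (p, j) / A $$ (p, p)"
        using decomposition[OF that] y_zero[OF that(1)] by simp
      then show ?thesis
        using completely_positive_symmetric[OF A(1,2) p(1) that(1)] by simp
    qed
    then have "\<forall>i<n. \<forall>j<n. A $$ (i, j) = A $$ (p, j) / A $$ (p, p) * A $$ (i, p)"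
      by blast
    then show False
      using rank_2_not_rank_one[OF A(1,3) p(1)] by contradiction
  qed
  then show ?thesis
    using that p decomposition by blast
qed

section \<open>Rotated factorizations\<close>

text \<open>The factor \<open>[x y]\<close> multiplied by the rotation by the angle \<open>arctan e\<close>.\<close>

definition rotated_factor :: "nat \<Rightarrow> (nat \<Rightarrow> real) \<Rightarrow> (nat \<Rightarrow> real) \<Rightarrow> real \<Rightarrow> real mat" where
  "rotated_factor n x y e = mat n 2 (\<lambda>(i, j).
     if j = 0 then (x i - e * y i) / sqrt (1 + e\<^sup>2) else (e * x i + y i) / sqrt (1 + e\<^sup>2))"

lemma rotated_factor_carrier: "rotated_factor n x y e \<in> carrier_mat n 2"
  by (simp add: rotated_factor_def)

lemma dim_rotated_factor [simp]:
  "dim_row (rotated_factor n x y e) = n" "dim_col (rotated_factor n x y e) = 2"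
  by (simp_all add: rotated_factor_def)

lemma rotated_factor_index:
  assumes "i < n"
  shows "rotated_factor n x y e $$ (i, 0) = (x i - e * y i) / sqrt (1 + e\<^sup>2)"
    and "rotated_factor n x y e $$ (i, 1) = (e * x i + y i) / sqrt (1 + e\<^sup>2)"
  using assms by (simp_all add: rotated_factor_def)

lemma rotated_factor_mult_transpose:
  assumes "i < n" "j < n"
  shows "(rotated_factor n x y e * transpose_mat (rotated_factor n x y e)) $$ (i, j) = x i * x j + y i * y j"
proof -
  let ?R = "rotated_factor n x y e"
  have r: "sqrt (1 + e\<^sup>2) * sqrt (1 + e\<^sup>2) = 1 + e\<^sup>2" "1 + e\<^sup>2 \<noteq> 0"
    using one_plus_square_pos[of e] by simp_all
  have "(?R * transpose_mat ?R) $$ (i, j) = ?R $$ (i, 0) * ?R $$ (j, 0) + ?R $$ (i, 1) * ?R $$ (j, 1)"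
    using index_mult_transpose_mat[of i ?R j] assms rotated_factor_carrier[of n x y e]
    by (simp add: numeral_2_eq_2)
  also have "\<dots> = ((x i - e * y i) * (x j - e * y j) + (e * x i + y i) * (e * x j + y j))
                  / (sqrt (1 + e\<^sup>2) * sqrt (1 + e\<^sup>2))"
    unfolding rotated_factor_index[OF assms(1)] rotated_factor_index[OF assms(2)]
    by (simp only: times_divide_times_eq, simp only: add_divide_distrib)
  also have "\<dots> = (1 + e\<^sup>2) * (x i * x j + y i * y j) / (1 + e\<^sup>2)"
    unfolding r(1) by (simp add: power2_eq_square algebra_simps)
  also have "\<dots> = x i * x j + y i * y j"
    using r(2) by simp
  finally show ?thesis .
qed

lemma rotated_factor_lin_indep2:
  assumes p: "p < n" "y p = 0" "0 < x p" and q: "q < n" "y q \<noteq> 0"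
  shows "lin_indep2 n (col (rotated_factor n x y e) 0) (col (rotated_factor n x y e) 1)"
proof -
  let ?R = "rotated_factor n x y e"
  have carrier: "col ?R 0 \<in> carrier_vec n" "col ?R 1 \<in> carrier_vec n"
    using col_dim[of ?R] by simp_all
  have "a = 0 \<and> b = 0" if "\<forall>i<n. a * col ?R 0 $ i + b * col ?R 1 $ i = 0" for a b
  proof -
    have "a * ?R $$ (p, 0) + b * ?R $$ (p, 1) = 0" "a * ?R $$ (q, 0) + b * ?R $$ (q, 1) = 0"
      using that p(1) q(1) rotated_factor_carrier[of n x y e] by simp_all
    then have row_p: "(a + b * e) * x p = 0" and row_q: "a * (x q - e * y q) + b * (e * x q + y q) = 0"
      unfolding rotated_factor_index[OF p(1)] rotated_factor_index[OF q(1)] p(2)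
      using one_plus_square_pos[of e] by (simp_all add: add_divide_distrib[symmetric] algebra_simps)
    have "a + b * e = 0"
      using row_p p(3) by simp
    then have a: "a = - b * e"
      by simp
    then have "b * ((1 + e\<^sup>2) * y q) = 0"
      using row_q by (simp add: power2_eq_square algebra_simps)
    moreover have "1 + e\<^sup>2 \<noteq> 0"
      using one_plus_square_pos[of e] by simp
    ultimately show ?thesis
      using a q(2) by simp
  qed
  then show ?thesis
    using lin_indep2_iff[OF carrier] by blast
qed

lemma rotated_factor_cp_factorization:
  assumes A: "A \<in> carrier_mat n n"
    and decomposition: "\<And>i j. i < n \<Longrightarrow> j < n \<Longrightarrow> A $$ (i, j) = x i * x j + y i * y j"
    and x_pos: "\<And>i. i < n \<Longrightarrow> 0 < x i" and y_nonneg: "\<And>i. i < n \<Longrightarrow> 0 \<le> y i"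
    and p: "p < n" "y p = 0" and q: "q < n" "y q \<noteq> 0"
    and e: "0 < e" "\<And>i. i < n \<Longrightarrow> e * y i \<le> x i"
  shows "cp_factorization A (rotated_factor n x y e)"
proof (rule cp_factorization_two_columnsI[OF rotated_factor_carrier])
  let ?R = "rotated_factor n x y e"
  show "dim_row A = n"
    using A by simp
  show "nonneg_mat ?R"
    unfolding nonneg_mat_def
  proof (intro allI impI)
    fix i j
    assume "i < dim_row ?R" "j < dim_col ?R"
    then have ij: "i < n" "j = 0 \<or> j = 1"
      using rotated_factor_carrier[of n x y e] by auto
    have "0 \<le> x i - e * y i" "0 \<le> e * x i + y i"
      using e(1) e(2)[OF ij(1)] x_pos[OF ij(1)] y_nonneg[OF ij(1)] by simp_all
    then show "0 \<le> ?R $$ (i, j)"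
      using ij by (auto simp: rotated_factor_def)
  qed
  show "A = ?R * transpose_mat ?R"
  proof (rule eq_matI)
    fix i j
    assume "i < dim_row (?R * transpose_mat ?R)" "j < dim_col (?R * transpose_mat ?R)"
    then show "A $$ (i, j) = (?R * transpose_mat ?R) $$ (i, j)"
      using decomposition rotated_factor_mult_transpose by simp
  qed (use A in simp_all)
  show "lin_indep2 n (col ?R 0) (col ?R 1)"
    using rotated_factor_lin_indep2[of p n y x q e, OF p x_pos[OF p(1)] q] .
qed

lemma rotated_factor_row_determines_angle:
  assumes p: "p < n" "y p = 0" "0 < x p"
    and ed: "0 < e" "e < 1" "0 < d" "d < 1"
    and row: "{rotated_factor n x y e $$ (p, 0), rotated_factor n x y e $$ (p, 1)}
              = {rotated_factor n x y d $$ (p, 0), rotated_factor n x y d $$ (p, 1)}"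
  shows "e = d"
proof -
  define u v where "u = x p / sqrt (1 + e\<^sup>2)" and "v = x p / sqrt (1 + d\<^sup>2)"
  have "0 < u" "0 < v"
    using p(3) one_plus_square_pos[of e] one_plus_square_pos[of d] by (simp_all add: u_def v_def)
  moreover have "{u, e * u} = {v, d * v}"
    using row[unfolded rotated_factor_index[OF p(1)] p(2)] by (simp add: u_def v_def)
  moreover have "d * e < 1" "e * d < 1"
    using ed mult_strict_mono[of d 1 e 1] by (simp_all add: mult.commute)
  ultimately show ?thesis
    by (auto simp: doubleton_eq_iff)
qed

lemma cp_rank_eq_2:
  fixes A B :: "real mat"
  assumes B: "B \<in> carrier_mat n 2" "nonneg_mat B" "A = B * transpose_mat B"
    and pq: "p < n" "q < n" "(A $$ (p, q))\<^sup>2 \<noteq> A $$ (p, p) * A $$ (q, q)"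
  shows "cp_rank A = 2"
  unfolding cp_rank_def
proof (rule Least_equality)
  show "\<exists>B. B \<in> carrier_mat (dim_row A) 2 \<and> nonneg_mat B \<and> A = B * transpose_mat B"
    using B by auto
next
  fix k
  assume "\<exists>W. W \<in> carrier_mat (dim_row A) k \<and> nonneg_mat W \<and> A = W * transpose_mat W"
  then obtain W where W: "W \<in> carrier_mat n k" "A = W * transpose_mat W"
    using B by auto
  have entry: "A $$ (i, j) = (\<Sum>l<k. W $$ (i, l) * W $$ (j, l))" if "i < n" "j < n" for i j
    using index_mult_transpose_mat[of i W j] W that by auto
  show "2 \<le> k"
  proof (rule ccontr)
    assume "\<not> 2 \<le> k"
    then consider "k = 0" | "k = 1"
      by linarith
    then have "(A $$ (p, q))\<^sup>2 = A $$ (p, p) * A $$ (q, q)"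
      using entry[OF pq(1,2)] entry[OF pq(1,1)] entry[OF pq(2,2)]
      by cases (simp_all add: power2_eq_square)
    then show False
      using pq(3) by contradiction
  qed
qed

definition pairwise_cp_inequivalent :: "real mat set \<Rightarrow> bool" where
  "pairwise_cp_inequivalent F \<longleftrightarrow> (\<forall>D. \<forall>B\<in>F. \<forall>C\<in>F. cp_equiv D B \<and> cp_equiv D C \<longrightarrow> B = C)"

lemma infinite_minimal_cp_classes_if_inequivalent:
  assumes "infinite F" "F \<subseteq> minimal_cp_factorizations A" "pairwise_cp_inequivalent F"
  shows "infinite (minimal_cp_classes A)"
proof -
  let ?R = "{(B, C). cp_equiv B C}"
  have "inj_on (\<lambda>B. ?R `` {B}) F"
  proof (rule inj_onI)
    fix B C
    assume BC: "B \<in> F" "C \<in> F" "?R `` {B} = ?R `` {C}"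
    then have "cp_equiv C B"
      using cp_equiv_refl[of B] by blast
    then show "B = C"
      using assms(3) BC(1,2) cp_equiv_refl[of C] unfolding pairwise_cp_inequivalent_def by blast
  qed
  moreover have "?R `` {B} \<in> minimal_cp_classes A" if "B \<in> F" for B
    unfolding minimal_cp_classes_def using quotientI[of B _ ?R] assms(2) that by blast
  then have "(\<lambda>B. ?R `` {B}) ` F \<subseteq> minimal_cp_classes A"
    by blast
  ultimately show ?thesis
    using assms(1) finite_imageD infinite_super by metis
qed

lemma not_unique_cp_factorization_if_inequivalent:
  assumes "B \<in> F" "C \<in> F" "B \<noteq> C" "\<And>B. B \<in> F \<Longrightarrow> cp_factorization A B" "pairwise_cp_inequivalent F"
  shows "\<not> unique_cp_factorization A"
  using assms unfolding unique_cp_factorization_def pairwise_cp_inequivalent_def by blast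

lemma infinite_small_angles:
  fixes x y :: "nat \<Rightarrow> real"
  assumes "\<And>i. i < n \<Longrightarrow> 0 < x i" "\<And>i. i < n \<Longrightarrow> 0 \<le> y i"
  shows "infinite {e. 0 < e \<and> e < 1 \<and> (\<forall>i<n. e * y i \<le> x i)}"
proof -
  define m where "m = Min (insert 1 ((\<lambda>i. x i / (1 + y i)) ` {..<n}))"
  have m_pos: "0 < m"
    using assms by (simp add: m_def add_pos_nonneg)
  have "e * y i \<le> x i" if "0 < e" "e < m" "i < n" for e i
  proof -
    have "e < x i / (1 + y i)"
      using that m_def by (metis (no_types, lifting) Min_le finite_imageI finite_insert finite_lessThan
          image_eqI insertCI lessThan_iff order_less_le_trans)
    then have "e * (1 + y i) < x i"
      using assms(2)[OF that(3)] by (simp add: field_simps add_nonneg_pos)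
    then show ?thesis
      using that(1) by (simp add: algebra_simps)
  qed
  moreover have "m \<le> 1"
    by (simp add: m_def)
  ultimately have "{0<..<m} \<subseteq> {e. 0 < e \<and> e < 1 \<and> (\<forall>i<n. e * y i \<le> x i)}"
    by auto
  then show ?thesis
    using infinite_Ioo[OF m_pos] infinite_super by blast
qed

lemma entrywise_positive_rank_2_decomposition:
  assumes A: "A \<in> carrier_mat n n" "completely_positive A" "vec_space.rank n A = 2"
    and pos: "\<And>i j. i < n \<Longrightarrow> j < n \<Longrightarrow> 0 < A $$ (i, j)"
  obtains p q x y where "p < n" "q < n" "\<And>i. i < n \<Longrightarrow> 0 < x i" "\<And>i. i < n \<Longrightarrow> 0 \<le> y i"
    "y p = 0" "y q \<noteq> 0" "\<And>i j. i < n \<Longrightarrow> j < n \<Longrightarrow> A $$ (i, j) = x i * x j + y i * y j"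
proof -
  obtain p q y where p: "p < n" and q: "q < n" and "0 < A $$ (p, p)"
    and y: "\<And>i. i < n \<Longrightarrow> 0 \<le> y i" "y p = 0" and "y q \<noteq> 0"
    and decomposition: "\<And>i j. i < n \<Longrightarrow> j < n \<Longrightarrow>
      A $$ (i, j) = A $$ (p, i) * A $$ (p, j) / A $$ (p, p) + y i * y j"
    using rank_2_cp_decomposition[OF A] by metis
  define x where "x i = A $$ (p, i) / sqrt (A $$ (p, p))" for i
  show ?thesis
  proof (rule that[OF p q _ y \<open>y q \<noteq> 0\<close>])
    show "0 < x i" if "i < n" for i
      using pos[OF p that] \<open>0 < A $$ (p, p)\<close> by (simp add: x_def)
    show "A $$ (i, j) = x i * x j + y i * y j" if "i < n" "j < n" for i j
      using decomposition[OF that] \<open>0 < A $$ (p, p)\<close>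
      by (simp add: x_def times_divide_times_eq abs_of_pos)
  qed
qed

lemma entrywise_positive_inequivalent_factorizations:
  assumes A: "A \<in> carrier_mat n n" "completely_positive A" "vec_space.rank n A = 2"
    and pos: "\<And>i j. i < n \<Longrightarrow> j < n \<Longrightarrow> 0 < A $$ (i, j)"
  obtains F where "infinite F" "F \<subseteq> minimal_cp_factorizations A" "pairwise_cp_inequivalent F"
proof -
  obtain p q x y where p: "p < n" and q: "q < n" "y q \<noteq> 0"
    and x_pos: "\<And>i. i < n \<Longrightarrow> 0 < x i" and y: "\<And>i. i < n \<Longrightarrow> 0 \<le> y i" "y p = 0"
    and decomposition: "\<And>i j. i < n \<Longrightarrow> j < n \<Longrightarrow> A $$ (i, j) = x i * x j + y i * y j"
    using entrywise_positive_rank_2_decomposition[OF A pos] by metis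
  let ?R = "rotated_factor n x y"
  define E where "E = {e. 0 < e \<and> e < 1 \<and> (\<forall>i<n. e * y i \<le> x i)}"
  have E_infinite: "infinite E"
    unfolding E_def using infinite_small_angles[of n x y] x_pos y(1) by blast
  have cp: "cp_factorization A (?R e)" if "e \<in> E" for e
    using rotated_factor_cp_factorization[OF A(1) decomposition x_pos y(1) p y(2) q] that
    unfolding E_def by blast
  have angle: "e = d" if "e \<in> E" "d \<in> E"
    and row: "{?R e $$ (p, 0), ?R e $$ (p, 1)} = {?R d $$ (p, 0), ?R d $$ (p, 1)}" for e d
    using rotated_factor_row_determines_angle[OF p y(2) x_pos[OF p] _ _ _ _ row] that
    unfolding E_def by blast
  obtain e0 where "e0 \<in> E"
    using infinite_imp_nonempty[OF E_infinite] by blast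
  have not_rank_one: "(A $$ (p, q))\<^sup>2 \<noteq> A $$ (p, p) * A $$ (q, q)"
    using decomposition[OF p q(1)] decomposition[OF p p] decomposition[OF q(1) q(1)]
      x_pos[OF p] q(2) y(2) by (simp add: power2_eq_square algebra_simps)
  have "nonneg_mat (?R e0)" "A = ?R e0 * transpose_mat (?R e0)"
    using cp[OF \<open>e0 \<in> E\<close>] unfolding cp_factorization_def by blast+
  then have rank: "cp_rank A = 2"
    using cp_rank_eq_2[OF rotated_factor_carrier _ _ p q(1) not_rank_one] by blast
  show ?thesis
  proof (rule that[of "?R ` E"])
    have "inj_on ?R E"
      using angle by (intro inj_onI) simp
    then show "infinite (?R ` E)"
      using E_infinite finite_imageD by blast
    show "?R ` E \<subseteq> minimal_cp_factorizations A"
      using cp rank by (auto simp: minimal_cp_factorizations_def)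
    show "pairwise_cp_inequivalent (?R ` E)"
      unfolding pairwise_cp_inequivalent_def
    proof (intro allI ballI impI)
      fix D B C
      assume "B \<in> ?R ` E" "C \<in> ?R ` E" "cp_equiv D B \<and> cp_equiv D C"
      then obtain e d where "e \<in> E" "d \<in> E" "B = ?R e" "C = ?R d"
        and "cp_equiv D (?R e)" "cp_equiv D (?R d)"
        by blast
      then show "B = C"
        using cp_equiv_two_columns_row[OF _ rotated_factor_carrier p] angle[of e d] by simp
    qed
  qed
qed

lemma entrywise_positive_cp_factorizations:
  assumes "A \<in> carrier_mat n n" "completely_positive A" "vec_space.rank n A = 2"
    and "\<And>i j. i < n \<Longrightarrow> j < n \<Longrightarrow> 0 < A $$ (i, j)"
  shows "infinite (minimal_cp_classes A)" "\<not> unique_cp_factorization A"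
proof -
  obtain F where F: "infinite F" "F \<subseteq> minimal_cp_factorizations A" "pairwise_cp_inequivalent F"
    using entrywise_positive_inequivalent_factorizations[OF assms] by blast
  then show "infinite (minimal_cp_classes A)"
    by (rule infinite_minimal_cp_classes_if_inequivalent)
  obtain B where "B \<in> F"
    using infinite_imp_nonempty[OF F(1)] by blast
  moreover obtain C where "C \<in> F" "C \<noteq> B"
    using infinite_imp_nonempty[of "F - {B}"] F(1) by auto
  moreover have "cp_factorization A D" if "D \<in> F" for D
    using F(2) that by (auto simp: minimal_cp_factorizations_def)
  ultimately show "\<not> unique_cp_factorization A"
    using not_unique_cp_factorization_if_inequivalent[OF _ _ _ _ F(3)] by metis
qed

lemma irreducible_mat_neighbour:
  assumes "A \<in> carrier_mat n n" "irreducible_mat A" "1 < n" "i < n"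
  obtains z where "z < n" "z \<noteq> i" "A $$ (i, z) \<noteq> 0"
proof -
  define j :: nat where "j = (if i = 0 then 1 else 0)"
  have "j < n" "j \<noteq> i"
    using assms(3) by (auto simp: j_def)
  then have "(i, j) \<in> {(x, y). x < n \<and> y < n \<and> x \<noteq> y \<and> A $$ (x, y) \<noteq> 0}\<^sup>*"
    using assms(1,2,4) unfolding irreducible_mat_def by auto
  then show ?thesis
    using \<open>j \<noteq> i\<close> that by (cases rule: converse_rtranclE) auto
qed

lemma irreducible_cp_positive_if_no_zero_pattern:
  assumes A: "A \<in> carrier_mat n n" "completely_positive A" "irreducible_mat A" "1 < n"
    and no_zero: "\<not> (\<exists>i<n. \<exists>j<n. i \<noteq> j \<and> A $$ (i, j) = 0 \<and> row A i \<noteq> 0\<^sub>v n \<and> col A j \<noteq> 0\<^sub>v n)"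
    and ij: "i < n" "j < n"
  shows "0 < A $$ (i, j)"
proof -
  have row_nonzero: "row A k \<noteq> 0\<^sub>v n" and diag: "0 < A $$ (k, k)" if k: "k < n" for k
  proof -
    obtain z where "z < n" "A $$ (k, z) \<noteq> 0"
      using irreducible_mat_neighbour[OF A(1,3,4) k] by blast
    then show "row A k \<noteq> 0\<^sub>v n" "0 < A $$ (k, k)"
      using A(1) k completely_positive_diag_pos[OF A(1,2) k] by (auto simp: vec_eq_iff)
  qed
  have "col A j = row A j"
    using A(1) ij(2) completely_positive_symmetric[OF A(1,2) _ ij(2)] by (auto intro!: eq_vecI)
  then have "A $$ (i, j) \<noteq> 0" if "i \<noteq> j"
    using no_zero that ij row_nonzero by metis
  then show ?thesis
    using diag[OF ij(1)] completely_positive_nonneg[OF A(1,2) ij] by (cases "i = j") auto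
qed

theorem corollary3p2:
  fixes A :: "real mat" and n :: nat
  assumes "A \<in> carrier_mat n n"
    and "completely_positive A"
    and "irreducible_mat A"
    and "vec_space.rank n A = 2"
  shows "(unique_cp_factorization A \<longleftrightarrow>
            (\<exists>i < n. \<exists>j < n. i \<noteq> j \<and> A $$ (i, j) = 0 \<and>
               row A i \<noteq> 0\<^sub>v n \<and> col A j \<noteq> 0\<^sub>v n))
       \<and> (\<not> (\<exists>i < n. \<exists>j < n. i \<noteq> j \<and> A $$ (i, j) = 0 \<and>
               row A i \<noteq> 0\<^sub>v n \<and> col A j \<noteq> 0\<^sub>v n)
          \<longrightarrow> infinite (minimal_cp_classes A))"
proof -
  have "unique_cp_factorization A"
    if "i < n" "j < n" "A $$ (i, j) = 0" "row A i \<noteq> 0\<^sub>v n" "col A j \<noteq> 0\<^sub>v n" for i j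
    using unique_cp_factorization_if_zero_entry[OF assms(1,2,4) that(1-3)]
      completely_positive_nonzero_row_diag_pos[OF assms(1,2) that(1,4)]
      completely_positive_nonzero_col_diag_pos[OF assms(1,2) that(2,5)] by blast
  moreover have "infinite (minimal_cp_classes A) \<and> \<not> unique_cp_factorization A"
    if "\<not> (\<exists>i<n. \<exists>j<n. i \<noteq> j \<and> A $$ (i, j) = 0 \<and> row A i \<noteq> 0\<^sub>v n \<and> col A j \<noteq> 0\<^sub>v n)"
    using entrywise_positive_cp_factorizations[OF assms(1,2,4)]
      irreducible_cp_positive_if_no_zero_pattern[OF assms(1-3) rank_2_dim_gt_1[OF assms(1,4)] that]
    by blast
  ultimately show ?thesis
    by blast
qed

end
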